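(* Let $N\ge 3$, $b\ge 1$ an integer, $\gamma>0$, and let $C\in\mathbb{R}^{N\times N}$ be a circulant matrix with $C\mathbb{1}=0$ and $r=\operatorname{rank}(C)$. Consider the plant $\dot x=u+w$, $z=\begin{bmatrix}C\\0\end{bmatrix}x+\begin{bmatrix}0\\ \gamma I\end{bmatrix}u$ with $x,u,w\in\mathbb{R}^N$ (one scalar state per node of the ring $\mathbb{Z}_N$), in feedback with a state-feedback controller $u=Kx$, $K$ a proper rational $N\times N$ transfer matrix, with closed-loop maps $\Phi_x=(sI-K)^{-1}$, $\Phi_u=K(sI-K)^{-1}$ and closed loop $\mathcal{F}(P;K)=\begin{bmatrix}C\Phi_x\\ \gamma\Phi_u\end{bmatrix}$ from $w$ to $z$. If $r>2b+1$, then there is no controller $K$ such that simultaneously: $K\mathbb{1}=0$; $\Phi_x,\Phi_u$ are strictly proper; $\Phi_x,\Phi_u$ are TF-structured with respect to $\mathcal{A}^{(b)}$; and $\mathcal{F}(P;K)$ is stable (has finite $\mathcal{H}_2$ norm). Equivalently, every relative controller that is closed-loop TF-structured with respect to $\mathcal{A}^{(b)}$ yields an unstable $\mathcal{F}(P;K)$.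
   Context: $\mathbb{1}$ is the all-ones vector. $\mathcal{A}^{(b)}$ is the $N\times N$ 0/1 matrix with $\mathcal{A}^{(b)}_{ij}=1$ iff the circular distance $\min(|i-j|,N-|i-j|)$ is at most $b$ (nodes within $b$ hops on the ring with nearest-neighbor edges). A transfer matrix $\Phi$ is TF-structured with respect to $\mathcal{A}^{(b)}$ if $\Phi_{ij}(s)\equiv 0$ whenever $\mathcal{A}^{(b)}_{ij}=0$. *)

theory Defs
  imports "HOL-Computational_Algebra.Polynomial" "HOL-Computational_Algebra.Fraction_Field"
    "Jordan_Normal_Form.DL_Rank"
begin

(* Real rational transfer functions are elements of the field  real poly fract.
   An N x N (transfer) matrix is a function nat => nat => 'a, only entries i,j < N matter. *)

type_synonym tf = "real poly fract"

definition tf_const :: "real \<Rightarrow> tf" where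
  "tf_const c = Fract [:c:] 1"

definition tf_s :: tf where
  "tf_s = Fract [:0, 1:] 1"

definition proper_tf :: "tf \<Rightarrow> bool" where
  "proper_tf f \<longleftrightarrow> (\<exists>p q. q \<noteq> 0 \<and> f = Fract p q \<and> degree p \<le> degree q)"

definition strictly_proper_tf :: "tf \<Rightarrow> bool" where
  "strictly_proper_tf f \<longleftrightarrow> (\<exists>p q. q \<noteq> 0 \<and> f = Fract p q \<and> (p = 0 \<or> degree p < degree q))"

(* finite H2 norm of a scalar rational transfer function: strictly proper and all poles
   in the open left half plane *)
definition H2_stable_tf :: "tf \<Rightarrow> bool" where
  "H2_stable_tf f \<longleftrightarrow> (\<exists>p q. q \<noteq> 0 \<and> f = Fract p q \<and> (p = 0 \<or> degree p < degree q) \<and>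
      (\<forall>z::complex. poly (map_poly complex_of_real q) z = 0 \<longrightarrow> Re z < 0))"

definition circ_dist :: "nat \<Rightarrow> nat \<Rightarrow> nat \<Rightarrow> nat" where
  "circ_dist N i j = min (if j \<le> i then i - j else j - i) (N - (if j \<le> i then i - j else j - i))"

definition adjA :: "nat \<Rightarrow> nat \<Rightarrow> nat \<Rightarrow> nat \<Rightarrow> real" where
  "adjA N b i j = (if circ_dist N i j \<le> b then 1 else 0)"

definition TF_structured :: "nat \<Rightarrow> (nat \<Rightarrow> nat \<Rightarrow> real) \<Rightarrow> (nat \<Rightarrow> nat \<Rightarrow> tf) \<Rightarrow> bool" where
  "TF_structured N A Phi \<longleftrightarrow> (\<forall>i<N. \<forall>j<N. A i j = 0 \<longrightarrow> Phi i j = 0)"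

definition circulant :: "nat \<Rightarrow> (nat \<Rightarrow> nat \<Rightarrow> real) \<Rightarrow> bool" where
  "circulant N C \<longleftrightarrow> (\<forall>i<N. \<forall>j<N. C i j = C 0 ((j + N - i) mod N))"

definition mat_rank :: "nat \<Rightarrow> (nat \<Rightarrow> nat \<Rightarrow> real) \<Rightarrow> nat" where
  "mat_rank N C = vec_space.rank N (mat N N (\<lambda>(i, j). C i j))"

definition tf_mult :: "nat \<Rightarrow> (nat \<Rightarrow> nat \<Rightarrow> tf) \<Rightarrow> (nat \<Rightarrow> nat \<Rightarrow> tf) \<Rightarrow> nat \<Rightarrow> nat \<Rightarrow> tf" where
  "tf_mult N A B i j = (\<Sum>k<N. A i k * B k j)"

definition tf_id :: "nat \<Rightarrow> nat \<Rightarrow> tf" where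
  "tf_id i j = (if i = j then 1 else 0)"

definition tf_inverse :: "nat \<Rightarrow> (nat \<Rightarrow> nat \<Rightarrow> tf) \<Rightarrow> (nat \<Rightarrow> nat \<Rightarrow> tf) \<Rightarrow> bool" where
  "tf_inverse N M Phi \<longleftrightarrow> (\<forall>i<N. \<forall>j<N. tf_mult N M Phi i j = tf_id i j \<and> tf_mult N Phi M i j = tf_id i j)"

definition sI_minus :: "(nat \<Rightarrow> nat \<Rightarrow> tf) \<Rightarrow> nat \<Rightarrow> nat \<Rightarrow> tf" where
  "sI_minus K i j = (if i = j then tf_s else 0) - K i j"

end

theory Submission
  imports Defs
begin

(* Evaluate the closed loop at s = 0. With U = K Phi_x, the identity (sI - K) Phi_x = I gives
   s Phi_x = I + U, and K 1 = 0 turns Phi_x (sI - K) = I into (s Phi_x) 1 = 1. Finite H2 norm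
   rules out a pole at 0 of C Phi_x and of Phi_u, so W = (s Phi_x)(0) = I + U(0) satisfies
   C W = 0 and W 1 = 1. Since U is structured, each column of W is supported on the 2b + 1 nodes
   within b hops of its index. For a circulant C, such a kernel vector is an annihilator of 2b + 1
   consecutive cyclic shifts of the first row, i.e. a linear recurrence of order at most 2b among
   consecutive rows of C, which forces rank C <= 2b. Hence W = 0, contradicting W 1 = 1. *)

definition tf_regular_at :: "real \<Rightarrow> tf \<Rightarrow> bool" where
  "tf_regular_at a f \<longleftrightarrow> (\<exists>p q. poly q a \<noteq> 0 \<and> f = Fract p q)"

(* Meaningful only if tf_regular_at a f; otherwise THE yields an unspecified value. *)
definition tf_value_at :: "real \<Rightarrow> tf \<Rightarrow> real" where
  "tf_value_at a f = (THE v. \<exists>p q. poly q a \<noteq> 0 \<and> f = Fract p q \<and> v = poly p a / poly q a)"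

lemma tf_regular_atI [intro]: "poly q a \<noteq> 0 \<Longrightarrow> tf_regular_at a (Fract p q)"
  unfolding tf_regular_at_def by blast

lemma tf_regular_atE:
  assumes "tf_regular_at a f"
  obtains p q where "poly q a \<noteq> 0" "f = Fract p q"
  using assms unfolding tf_regular_at_def by blast

lemma tf_value_at_Fract:
  assumes q: "poly q a \<noteq> 0"
  shows "tf_value_at a (Fract p q) = poly p a / poly q a"
  unfolding tf_value_at_def
proof (rule the_equality)
  fix v assume "\<exists>p' q'. poly q' a \<noteq> 0 \<and> Fract p q = Fract p' q' \<and> v = poly p' a / poly q' a"
  then obtain p' q' where q': "poly q' a \<noteq> 0" and eq: "Fract p q = Fract p' q'"
    and v: "v = poly p' a / poly q' a" by blast
  have "q \<noteq> 0" "q' \<noteq> 0" using q q' by auto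
  then have "p * q' = p' * q" using eq eq_fract(1) by blast
  then have "poly p a * poly q' a = poly p' a * poly q a" by (metis poly_mult)
  then show "v = poly p a / poly q a" using q q' v by (simp add: frac_eq_eq)
qed (use q in blast)

lemma
  assumes "tf_regular_at a f" "tf_regular_at a g"
  shows tf_regular_at_add: "tf_regular_at a (f + g)"
    and tf_value_at_add: "tf_value_at a (f + g) = tf_value_at a f + tf_value_at a g"
proof -
  obtain p q where f: "poly q a \<noteq> 0" "f = Fract p q" using assms(1) by (rule tf_regular_atE)
  obtain p' q' where g: "poly q' a \<noteq> 0" "g = Fract p' q'" using assms(2) by (rule tf_regular_atE)
  note pq = f g
  have "q \<noteq> 0" "q' \<noteq> 0" using pq by auto
  then have sum: "f + g = Fract (p * q' + p' * q) (q * q')" using pq by simp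
  show "tf_regular_at a (f + g)" unfolding sum using pq by auto
  show "tf_value_at a (f + g) = tf_value_at a f + tf_value_at a g"
    unfolding sum using pq by (simp add: tf_value_at_Fract field_simps)
qed

lemma
  assumes "tf_regular_at a f" "tf_regular_at a g"
  shows tf_regular_at_mult: "tf_regular_at a (f * g)"
    and tf_value_at_mult: "tf_value_at a (f * g) = tf_value_at a f * tf_value_at a g"
proof -
  obtain p q where f: "poly q a \<noteq> 0" "f = Fract p q" using assms(1) by (rule tf_regular_atE)
  obtain p' q' where g: "poly q' a \<noteq> 0" "g = Fract p' q'" using assms(2) by (rule tf_regular_atE)
  note pq = f g
  then have prod: "f * g = Fract (p * p') (q * q')" by simp
  show "tf_regular_at a (f * g)" unfolding prod using pq by auto
  show "tf_value_at a (f * g) = tf_value_at a f * tf_value_at a g"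
    unfolding prod using pq by (simp add: tf_value_at_Fract)
qed

lemma
  shows tf_regular_at_const: "tf_regular_at a (tf_const c)"
    and tf_value_at_const: "tf_value_at a (tf_const c) = c"
  unfolding tf_const_def by (auto simp: tf_value_at_Fract)

lemma
  shows tf_regular_at_s: "tf_regular_at a tf_s"
    and tf_value_at_s: "tf_value_at a tf_s = a"
  unfolding tf_s_def by (auto simp: tf_value_at_Fract)

lemma tf_const_0: "tf_const 0 = 0"
  unfolding tf_const_def by (simp add: Zero_fract_def)

lemma tf_const_1: "tf_const 1 = 1"
  unfolding tf_const_def by (simp add: One_fract_def one_pCons)

lemma tf_const_mult: "tf_const c * tf_const d = tf_const (c * d)"
  unfolding tf_const_def by (simp add: mult.commute)

lemma
  shows tf_regular_at_0: "tf_regular_at a 0"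
    and tf_value_at_0: "tf_value_at a 0 = 0"
    and tf_regular_at_1: "tf_regular_at a 1"
    and tf_value_at_1: "tf_value_at a 1 = 1"
  using tf_regular_at_const tf_value_at_const unfolding tf_const_0[symmetric] tf_const_1[symmetric]
  by blast+

lemma tf_regular_at_tf_id: "tf_regular_at a (tf_id i j)"
  unfolding tf_id_def by (simp add: tf_regular_at_0 tf_regular_at_1)

lemma tf_regular_at_sum:
  "(\<And>x. x \<in> A \<Longrightarrow> tf_regular_at a (f x)) \<Longrightarrow> tf_regular_at a (\<Sum>x\<in>A. f x)"
  by (induction A rule: infinite_finite_induct) (simp_all add: tf_regular_at_0 tf_regular_at_add)

lemma tf_value_at_sum:
  "(\<And>x. x \<in> A \<Longrightarrow> tf_regular_at a (f x)) \<Longrightarrow>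
    tf_value_at a (\<Sum>x\<in>A. f x) = (\<Sum>x\<in>A. tf_value_at a (f x))"
  by (induction A rule: infinite_finite_induct)
    (simp_all add: tf_value_at_0 tf_value_at_add tf_regular_at_sum)

lemma tf_regular_at_const_mult_iff:
  assumes "c \<noteq> 0"
  shows "tf_regular_at a (tf_const c * f) \<longleftrightarrow> tf_regular_at a f"
proof
  assume "tf_regular_at a (tf_const c * f)"
  moreover have "f = tf_const (1 / c) * (tf_const c * f)"
    using assms by (simp add: mult.assoc[symmetric] tf_const_mult tf_const_1)
  ultimately show "tf_regular_at a f" by (metis tf_regular_at_mult tf_regular_at_const)
next
  assume "tf_regular_at a f"
  then show "tf_regular_at a (tf_const c * f)" by (intro tf_regular_at_mult tf_regular_at_const)
qed

lemma H2_stable_tf_regular_at_0: "H2_stable_tf f \<Longrightarrow> tf_regular_at 0 f"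
proof -
  assume "H2_stable_tf f"
  then obtain p q where "f = Fract p q"
    and stable: "\<forall>z. poly (map_poly complex_of_real q) z = 0 \<longrightarrow> Re z < 0"
    unfolding H2_stable_tf_def by blast
  moreover have "poly q 0 \<noteq> 0"
    using stable[rule_format, of 0] by (auto simp: poly_0_coeff_0 coeff_map_poly)
  ultimately show ?thesis by auto
qed

lemma sI_minus_inverse_s_mult:
  assumes inv: "tf_inverse N (sI_minus K) X" and "i < N" "j < N"
  shows "tf_s * X i j = tf_mult N K X i j + tf_id i j"
proof -
  have "tf_id i j = tf_mult N (sI_minus K) X i j"
    using inv \<open>i < N\<close> \<open>j < N\<close> unfolding tf_inverse_def by simp
  also have "\<dots> = (\<Sum>k<N. (if i = k then tf_s else 0) * X k j) - tf_mult N K X i j"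
    unfolding tf_mult_def sI_minus_def by (simp add: left_diff_distrib sum_subtractf)
  also have "(\<Sum>k<N. (if i = k then tf_s else 0) * X k j) = (\<Sum>k<N. if i = k then tf_s * X i j else 0)"
    by (intro sum.cong) auto
  also have "\<dots> = tf_s * X i j" using \<open>i < N\<close> by simp
  finally show ?thesis by (simp add: algebra_simps)
qed

lemma sI_minus_inverse_row_sum:
  assumes inv: "tf_inverse N (sI_minus K) X" and relative: "\<forall>k<N. (\<Sum>j<N. K k j) = 0"
    and "i < N"
  shows "(\<Sum>j<N. tf_s * X i j) = 1"
proof -
  have row_sum_sI_minus: "(\<Sum>j<N. sI_minus K k j) = tf_s" if "k < N" for k
    using relative that unfolding sI_minus_def by (simp add: sum_subtractf)
  have "1 = (\<Sum>j<N. tf_mult N X (sI_minus K) i j)"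
    using inv \<open>i < N\<close> unfolding tf_inverse_def tf_id_def by simp
  also have "\<dots> = (\<Sum>k<N. X i k * (\<Sum>j<N. sI_minus K k j))"
    unfolding tf_mult_def by (subst sum.swap) (simp add: sum_distrib_left)
  also have "\<dots> = (\<Sum>k<N. tf_s * X i k)" by (simp add: row_sum_sI_minus mult.commute)
  finally show ?thesis by simp
qed

lemma (in vec_space) rank_le_if_tail_determines_span:
  assumes A: "A \<in> carrier_mat n nc"
    and tail: "\<And>y. y \<in> span (set (cols A)) \<Longrightarrow> (\<And>i. n - e \<le> i \<Longrightarrow> i < n \<Longrightarrow> y $ i = 0) \<Longrightarrow> y = 0\<^sub>v n"
  shows "rank A \<le> e"
proof (rule ccontr)
  assume "\<not> rank A \<le> e"
  obtain S where max: "maximal S (\<lambda>T. T \<subseteq> set (cols A) \<and> lin_indpt T)"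
    using maximal_exists[of "\<lambda>T. T \<subseteq> set (cols A) \<and> lin_indpt T" "card (set (cols A))" "{}"]
    by (meson List.finite_set card_mono empty_iff empty_subsetI finite_lin_indpt2 rev_finite_subset)
  have S: "S \<subseteq> set (cols A)" "lin_indpt S" using max unfolding maximal_def by auto
  obtain ws where ws: "distinct ws" "set ws = S"
    using finite_distinct_list[OF finite_subset[OF S(1)]] by blast
  define m where "m = length ws"
  have "e < m"
    using \<open>\<not> rank A \<le> e\<close> rank_card_indpt[OF A max] distinct_card[OF ws(1)] ws(2) m_def by simp
  have ws_carrier: "set ws \<subseteq> carrier_vec n" using S(1) ws(2) A cols_dim by blast
  define B where "B = mat_of_cols n ws"
  have B: "B \<in> carrier_mat n m" and cols_B: "cols B = ws"
    unfolding B_def m_def using ws_carrier by auto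
  \<comment> \<open>The last e rows of B, padded with zero rows to a singular square matrix.\<close>
  define P where "P = mat\<^sub>r m m (\<lambda>i. if i < e then row B (n - e + i) else 0\<^sub>v m)"
  have "P = mat\<^sub>r m m (\<lambda>i. if i = m - 1 then 0\<^sub>v m else if i < e then row B (n - e + i) else 0\<^sub>v m)"
    unfolding P_def using \<open>e < m\<close> by (intro arg_cong[of _ _ "mat\<^sub>r m m"]) auto
  then have "det P = 0"
    using \<open>e < m\<close> B by (simp only:) (rule det_row_0, auto)
  then obtain v where v: "v \<in> carrier_vec m" "v \<noteq> 0\<^sub>v m" "P *\<^sub>v v = 0\<^sub>v m"
    using det_0_iff_vec_prod_zero[of P m] unfolding P_def by auto
  have "B *\<^sub>v v \<in> span (set (cols A))"
    using lincomb_eq_mat_mult[OF B v(1)] cols_B ws S(1) by (metis List.finite_set in_spanI)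
  moreover have "(B *\<^sub>v v) $ i = 0" if "n - e \<le> i" "i < n" for i
  proof -
    have "(B *\<^sub>v v) $ i = (P *\<^sub>v v) $ (i - (n - e))"
      using that B \<open>e < m\<close> unfolding P_def by auto
    then show ?thesis using v(3) that \<open>e < m\<close> by simp
  qed
  ultimately have "B *\<^sub>v v = 0\<^sub>v n" by (rule tail)
  then have "lin_dep S" using lin_depI[OF B v(1,2)] cols_B ws by simp
  then show False using S(2) by simp
qed

lemma recurrence_zero_if_tail_zero:
  fixes y u :: "nat \<Rightarrow> 'a :: idom"
  assumes lead: "u e \<noteq> 0"
    and rec: "\<And>t. e \<le> t \<Longrightarrow> t < n \<Longrightarrow> (\<Sum>d\<le>e. u d * y (t - d)) = 0"
    and tail: "\<And>i. n - e \<le> i \<Longrightarrow> i < n \<Longrightarrow> y i = 0"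
  shows "m < n \<Longrightarrow> y m = 0"
proof (induction "n - m" arbitrary: m rule: less_induct)
  case less
  show ?case
  proof (cases "n - e \<le> m")
    case True
    then show ?thesis using tail less by blast
  next
    case False
    have later: "y (m + e - d) = 0" if "d < e" for d
      using less.hyps[of "m + e - d"] that False by auto
    have "0 = (\<Sum>d\<le>e. u d * y (m + e - d))" using rec[of "m + e"] False by simp
    also have "\<dots> = (\<Sum>d<e. u d * y (m + e - d)) + u e * y m"
      by (simp add: lessThan_Suc_atMost[symmetric])
    also have "\<dots> = u e * y m" using later by simp
    finally show ?thesis using lead by simp
  qed
qed

lemma rank_le_of_row_recurrence:
  fixes C :: "nat \<Rightarrow> nat \<Rightarrow> 'a :: field"
  assumes lead: "u e \<noteq> 0"
    and rec: "\<And>t l. e \<le> t \<Longrightarrow> t < n \<Longrightarrow> l < nc \<Longrightarrow> (\<Sum>d\<le>e. u d * C (t - d) l) = 0"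
  shows "vec_space.rank n (mat n nc (\<lambda>(i, j). C i j)) \<le> e"
proof -
  interpret vec_space "TYPE('a)" n .
  define A where "A = mat n nc (\<lambda>(i, j). C i j)"
  have A: "A \<in> carrier_mat n nc" unfolding A_def by simp
  have "rank A \<le> e"
  proof (rule rank_le_if_tail_determines_span[OF A])
    fix y assume y: "y \<in> span (set (cols A))"
      and y_tail: "\<And>i. n - e \<le> i \<Longrightarrow> i < n \<Longrightarrow> y $ i = 0"
    have cols_A: "set (cols A) \<subseteq> carrier_vec n" using A cols_dim by blast
    obtain a S where S: "y = lincomb a S" "finite S" "S \<subseteq> set (cols A)"
      using in_spanE[OF y] by blast
    have column: "\<exists>l<nc. \<forall>i<n. x $ i = C i l" if x: "x \<in> S" for x
    proof -
      obtain l where "l < length (cols A)" "x = cols A ! l"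
        using S(3) x in_set_conv_nth[of x "cols A"] by blast
      then show ?thesis unfolding A_def by (intro exI[of _ l]) auto
    qed
    have y_rec: "(\<Sum>d\<le>e. u d * y $ (t - d)) = 0" if "e \<le> t" "t < n" for t
    proof -
      have "(\<Sum>d\<le>e. u d * y $ (t - d)) = (\<Sum>d\<le>e. \<Sum>x\<in>S. u d * (a x * x $ (t - d)))"
        using S cols_A that by (simp add: lincomb_index sum_distrib_left)
      also have "\<dots> = (\<Sum>x\<in>S. a x * (\<Sum>d\<le>e. u d * x $ (t - d)))"
        by (subst sum.swap) (simp add: sum_distrib_left ac_simps)
      also have "\<dots> = 0"
      proof (rule sum.neutral, intro ballI)
        fix x assume "x \<in> S"
        then obtain l where "l < nc" "\<forall>i<n. x $ i = C i l" using column by blast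
        then show "a x * (\<Sum>d\<le>e. u d * x $ (t - d)) = 0" using rec[of t l] that by simp
      qed
      finally show ?thesis .
    qed
    have "y \<in> carrier_vec n" using span_closed[OF cols_A y] by simp
    then show "y = 0\<^sub>v n"
      using recurrence_zero_if_tail_zero[OF lead y_rec y_tail] by (intro eq_vecI) auto
  qed
  then show ?thesis unfolding A_def .
qed

lemma circulant_entry:
  assumes circ: "circulant N C" and "i < N" "j < N"
  shows "C i j = C 0 (nat ((int j - int i) mod int N))"
proof -
  have "int ((j + N - i) mod N) = (int j - int i + int N) mod int N"
    using \<open>i < N\<close> by (simp add: of_nat_mod of_nat_diff algebra_simps)
  also have "\<dots> = (int j - int i) mod int N" by simp
  finally have "int ((j + N - i) mod N) = (int j - int i) mod int N" .
  then show ?thesis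
    using circ \<open>i < N\<close> \<open>j < N\<close> unfolding circulant_def by (metis nat_int)
qed

lemma mat_rank_le_dim: "mat_rank N C \<le> N"
  unfolding mat_rank_def by (rule vec_space.rank_le_nc) simp

(* Rows of a circulant are cyclic shifts of row 0, so an annihilator of the shifts of row 0
   is a linear recurrence among consecutive rows, whose order is its highest nonzero index. *)
lemma circulant_rank_le_of_annihilator:
  fixes C :: "nat \<Rightarrow> nat \<Rightarrow> real"
  assumes circ: "circulant N C" and "d0 \<le> m" "u d0 \<noteq> 0"
    and annih: "\<And>s :: int. (\<Sum>d\<le>m. u d * C 0 (nat ((s + int d) mod int N))) = 0"
  shows "mat_rank N C \<le> m"
proof -
  obtain e where "e \<le> m \<and> u e \<noteq> 0" and greatest: "\<forall>d. d \<le> m \<and> u d \<noteq> 0 \<longrightarrow> d \<le> e"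
    using ex_has_greatest_nat[of "\<lambda>d. d \<le> m \<and> u d \<noteq> 0" d0 "\<lambda>d. d" "Suc m"] assms(2,3) by auto
  then have e: "e \<le> m" "u e \<noteq> 0" by auto
  have annih_e: "(\<Sum>d\<le>e. u d * C 0 (nat ((s + int d) mod int N))) = 0" for s :: int
  proof -
    have "(\<Sum>d\<le>e. u d * C 0 (nat ((s + int d) mod int N)))
        = (\<Sum>d\<le>m. u d * C 0 (nat ((s + int d) mod int N)))"
      using e(1) greatest by (intro sum.mono_neutral_left) auto
    then show ?thesis using annih[of s] by simp
  qed
  have "vec_space.rank N (mat N N (\<lambda>(i, j). C i j)) \<le> e"
  proof (rule rank_le_of_row_recurrence[where u = u, OF e(2)])
    fix t l assume "e \<le> t" "t < N" "l < N"
    then have "(\<Sum>d\<le>e. u d * C (t - d) l)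
        = (\<Sum>d\<le>e. u d * C 0 (nat ((int l - int t + int d) mod int N)))"
      by (intro sum.cong refl) (simp add: circulant_entry[OF circ] of_nat_diff algebra_simps)
    also have "\<dots> = 0" by (rule annih_e)
    finally show "(\<Sum>d\<le>e. u d * C (t - d) l) = 0" .
  qed
  then show ?thesis using e(1) unfolding mat_rank_def by simp
qed

lemma circ_dist_le_imp_window:
  assumes "k < N" "j < N" "circ_dist N k j \<le> b" "b \<le> N"
  shows "\<exists>d\<le>2 * b. k = (j + N - b + d) mod N"
proof -
  consider "j \<le> k" "k - j \<le> b" | "j \<le> k" "N - (k - j) \<le> b"
    | "k < j" "j - k \<le> b" | "k < j" "N - (j - k) \<le> b"
    using assms(3) unfolding circ_dist_def by (cases "j \<le> k") (auto simp: min_def split: if_splits)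
  then show ?thesis
  proof cases
    case 1
    then show ?thesis using assms by (intro exI[of _ "k - j + b"]) auto
  next
    case 2
    then show ?thesis using assms by (intro exI[of _ "b - (N - k + j)"]) auto
  next
    case 3
    then show ?thesis using assms by (intro exI[of _ "b - (j - k)"]) auto
  next
    case 4
    then have "j + N - b + (b + N - j + k) = k + N * 2" using assms by auto
    then show ?thesis using 4 assms by (intro exI[of _ "b + N - j + k"]) auto
  qed
qed

lemma inj_on_add_mod_atMost:
  fixes a N :: nat
  assumes "m < N"
  shows "inj_on (\<lambda>d. (a + d) mod N) {..m}"
proof -
  have "x = y" if "x \<le> y" "y \<le> m" "(a + x) mod N = (a + y) mod N" for x y
  proof -
    have "N dvd y - x" using that mod_eq_dvd_iff_nat[of "a + x" "a + y" N] by simp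
    then show "x = y" using that assms by (auto dest: dvd_imp_le)
  qed
  then show ?thesis by (intro inj_onI) (metis atMost_iff nat_le_linear)
qed

lemma sum_circ_window:
  fixes w f :: "nat \<Rightarrow> 'a :: semiring_0"
  assumes "j < N" "2 * b < N" and band: "\<And>k. k < N \<Longrightarrow> b < circ_dist N k j \<Longrightarrow> w k = 0"
  shows "(\<Sum>k<N. f k * w k)
    = (\<Sum>d\<le>2 * b. f ((j + N - b + d) mod N) * w ((j + N - b + d) mod N))"
proof -
  let ?win = "\<lambda>d. (j + N - b + d) mod N"
  have "b \<le> N" using \<open>2 * b < N\<close> by simp
  have "w k = 0" if "k < N" "k \<notin> ?win ` {..2 * b}" for k
  proof (rule band[OF \<open>k < N\<close>], rule ccontr)
    assume "\<not> b < circ_dist N k j"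
    then have "circ_dist N k j \<le> b" by simp
    then obtain d where "d \<le> 2 * b" "k = ?win d"
      using circ_dist_le_imp_window[OF \<open>k < N\<close> \<open>j < N\<close> _ \<open>b \<le> N\<close>] by blast
    then show False using that(2) by blast
  qed
  then have "(\<Sum>k<N. f k * w k) = (\<Sum>k\<in>?win ` {..2 * b}. f k * w k)"
    using \<open>2 * b < N\<close> by (intro sum.mono_neutral_right) auto
  also have "\<dots> = (\<Sum>d\<le>2 * b. f (?win d) * w (?win d))"
    using inj_on_add_mod_atMost[OF \<open>2 * b < N\<close>] by (subst sum.reindex) auto
  finally show ?thesis .
qed

lemma circulant_kernel_window_zero:
  fixes C :: "nat \<Rightarrow> nat \<Rightarrow> real" and w :: "nat \<Rightarrow> real"
  assumes circ: "circulant N C" and rank: "2 * b < mat_rank N C" and "j < N"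
    and band: "\<And>k. k < N \<Longrightarrow> b < circ_dist N k j \<Longrightarrow> w k = 0"
    and ker: "\<And>i. i < N \<Longrightarrow> (\<Sum>k<N. C i k * w k) = 0"
    and "k < N"
  shows "w k = 0"
proof (rule ccontr)
  assume "w k \<noteq> 0"
  have "2 * b < N" using rank mat_rank_le_dim[of N C] by simp
  define win where "win d = (j + N - b + d) mod N" for d
  have win_N: "win d < N" for d unfolding win_def using \<open>2 * b < N\<close> by simp
  have annih: "(\<Sum>d\<le>2 * b. w (win d) * C 0 (nat ((s + int d) mod int N))) = 0" for s :: int
  proof -
    define i where "i = nat ((int j - int b - s) mod int N)"
    have "i < N" unfolding i_def using \<open>2 * b < N\<close> by (simp add: nat_less_iff)
    have entry: "C i (win d) = C 0 (nat ((s + int d) mod int N))" for d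
    proof -
      have "int (win d) = (int j - int b + int d + int N) mod int N"
        unfolding win_def using \<open>2 * b < N\<close> by (simp add: of_nat_mod of_nat_diff algebra_simps)
      also have "\<dots> = (int j - int b + int d) mod int N" by simp
      finally have "int (win d) = (int j - int b + int d) mod int N" .
      then have "(int (win d) - int i) mod int N = (s + int d) mod int N"
        unfolding i_def using \<open>2 * b < N\<close> by (simp add: mod_diff_eq) (simp add: mod_simps algebra_simps)
      then show ?thesis using circulant_entry[OF circ \<open>i < N\<close> win_N] by simp
    qed
    have "0 = (\<Sum>k<N. C i k * w k)" using ker[OF \<open>i < N\<close>] by simp
    also have "\<dots> = (\<Sum>d\<le>2 * b. C i (win d) * w (win d))"
      unfolding win_def by (rule sum_circ_window[OF \<open>j < N\<close> \<open>2 * b < N\<close> band])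
    finally show ?thesis by (simp add: entry mult.commute)
  qed
  have "circ_dist N k j \<le> b" "b \<le> N"
    using band[OF \<open>k < N\<close>] \<open>w k \<noteq> 0\<close> \<open>2 * b < N\<close> by (meson not_less, simp)
  then obtain d0 where "d0 \<le> 2 * b" "k = win d0"
    using circ_dist_le_imp_window[OF \<open>k < N\<close> \<open>j < N\<close>] unfolding win_def by blast
  then have "mat_rank N C \<le> 2 * b"
    using \<open>w k \<noteq> 0\<close> by (intro circulant_rank_le_of_annihilator[OF circ _ _ annih]) auto
  then show False using rank by simp
qed

lemma no_banded_relative_controller_regular_at_0:
  fixes C :: "nat \<Rightarrow> nat \<Rightarrow> real" and K X :: "nat \<Rightarrow> nat \<Rightarrow> tf"
  assumes circ: "circulant N C" and rank: "2 * b < mat_rank N C"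
    and inv: "tf_inverse N (sI_minus K) X" and relative: "\<forall>k<N. (\<Sum>j<N. K k j) = 0"
    and banded: "TF_structured N (adjA N b) (tf_mult N K X)"
    and CX_regular: "\<And>i j. i < N \<Longrightarrow> j < N \<Longrightarrow> tf_regular_at 0 (\<Sum>k<N. tf_const (C i k) * X k j)"
    and KX_regular: "\<And>i j. i < N \<Longrightarrow> j < N \<Longrightarrow> tf_regular_at 0 (tf_mult N K X i j)"
  shows False
proof -
  have "0 < N" using rank mat_rank_le_dim[of N C] by simp
  have sX_regular: "tf_regular_at 0 (tf_s * X k j)" if "k < N" "j < N" for k j
    using sI_minus_inverse_s_mult[OF inv that] KX_regular[OF that]
    by (simp add: tf_regular_at_add tf_regular_at_tf_id)
  define W where "W k j = tf_value_at 0 (tf_s * X k j)" for k j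
  have kernel: "(\<Sum>k<N. C i k * W k j) = 0" if "i < N" "j < N" for i j
  proof -
    have "(\<Sum>k<N. C i k * W k j) = (\<Sum>k<N. tf_value_at 0 (tf_const (C i k) * (tf_s * X k j)))"
      using sX_regular \<open>j < N\<close> unfolding W_def
      by (simp add: tf_value_at_mult tf_regular_at_const tf_value_at_const)
    also have "\<dots> = tf_value_at 0 (\<Sum>k<N. tf_const (C i k) * (tf_s * X k j))"
      using sX_regular \<open>j < N\<close>
      by (intro tf_value_at_sum[symmetric]) (simp add: tf_regular_at_mult tf_regular_at_const)
    also have "(\<Sum>k<N. tf_const (C i k) * (tf_s * X k j)) = tf_s * (\<Sum>k<N. tf_const (C i k) * X k j)"
      by (simp add: sum_distrib_left mult.left_commute)
    also have "tf_value_at 0 \<dots> = 0"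
      using CX_regular[OF that] by (simp add: tf_value_at_mult tf_regular_at_s tf_value_at_s)
    finally show ?thesis .
  qed
  have outside_band: "W k j = 0" if "k < N" "j < N" "b < circ_dist N k j" for k j
  proof -
    have "tf_mult N K X k j = 0" using banded that unfolding TF_structured_def adjA_def by simp
    moreover have "k \<noteq> j" using that unfolding circ_dist_def by auto
    ultimately have "tf_s * X k j = 0"
      using sI_minus_inverse_s_mult[OF inv that(1,2)] by (simp add: tf_id_def)
    then show ?thesis unfolding W_def by (simp only: tf_value_at_0)
  qed
  have "W 0 j = 0" if "j < N" for j
    using circulant_kernel_window_zero[OF circ rank that, of "\<lambda>k. W k j"] outside_band kernel that \<open>0 < N\<close>
    by blast
  moreover have "(\<Sum>j<N. W 0 j) = tf_value_at 0 (\<Sum>j<N. tf_s * X 0 j)"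
    unfolding W_def using sX_regular \<open>0 < N\<close> by (intro tf_value_at_sum[symmetric]) auto
  moreover have "\<dots> = 1"
    using sI_minus_inverse_row_sum[OF inv relative \<open>0 < N\<close>] by (simp add: tf_value_at_1)
  ultimately show False by simp
qed

theorem theorem2:
  fixes N b :: nat and \<gamma> :: real and C :: "nat \<Rightarrow> nat \<Rightarrow> real"
  assumes "N \<ge> 3" and "b \<ge> 1" and "\<gamma> > 0"
    and "circulant N C"
    and "\<forall>i<N. (\<Sum>j<N. C i j) = 0"
    and "mat_rank N C > 2 * b + 1"
  shows "\<not> (\<exists>K Phi_x Phi_u :: nat \<Rightarrow> nat \<Rightarrow> tf.
            (\<forall>i<N. \<forall>j<N. proper_tf (K i j))
          \<and> tf_inverse N (sI_minus K) Phi_x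
          \<and> (\<forall>i<N. \<forall>j<N. Phi_u i j = tf_mult N K Phi_x i j)
          \<and> (\<forall>i<N. (\<Sum>j<N. K i j) = 0)
          \<and> (\<forall>i<N. \<forall>j<N. strictly_proper_tf (Phi_x i j) \<and> strictly_proper_tf (Phi_u i j))
          \<and> TF_structured N (adjA N b) Phi_x
          \<and> TF_structured N (adjA N b) Phi_u
          \<and> (\<forall>i<N. \<forall>j<N. H2_stable_tf (\<Sum>k<N. tf_const (C i k) * Phi_x k j))
          \<and> (\<forall>i<N. \<forall>j<N. H2_stable_tf (tf_const \<gamma> * Phi_u i j)))"
proof -
  have False
    if inv: "tf_inverse N (sI_minus K) X" and U: "\<forall>i<N. \<forall>j<N. U i j = tf_mult N K X i j"
      and relative: "\<forall>i<N. (\<Sum>j<N. K i j) = 0" and banded: "TF_structured N (adjA N b) U"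
      and CX_stable: "\<forall>i<N. \<forall>j<N. H2_stable_tf (\<Sum>k<N. tf_const (C i k) * X k j)"
      and U_stable: "\<forall>i<N. \<forall>j<N. H2_stable_tf (tf_const \<gamma> * U i j)"
    for K X U :: "nat \<Rightarrow> nat \<Rightarrow> tf"
  proof (rule no_banded_relative_controller_regular_at_0[OF \<open>circulant N C\<close> _ inv relative])
    show "2 * b < mat_rank N C" using \<open>mat_rank N C > 2 * b + 1\<close> by simp
    show "TF_structured N (adjA N b) (tf_mult N K X)" using banded U unfolding TF_structured_def by simp
    show "tf_regular_at 0 (\<Sum>k<N. tf_const (C i k) * X k j)" if "i < N" "j < N" for i j
      using CX_stable that by (simp add: H2_stable_tf_regular_at_0)
    show "tf_regular_at 0 (tf_mult N K X i j)" if "i < N" "j < N" for i j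
      using U_stable U that \<open>\<gamma> > 0\<close> H2_stable_tf_regular_at_0 tf_regular_at_const_mult_iff
      by (metis less_irrefl)
  qed
  then show ?thesis by blast
qed

end
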